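(* Let $(\mathbf A,\tau)$ be a state-morphism algebra and let $\theta_\tau=\{(x,y)\in A\times A:\tau(x)=\tau(y)\}$. If $\theta$ is a congruence of $\mathbf A$ with $\theta\subseteq\theta_\tau$, then $\theta$ is a congruence of $(\mathbf A,\tau)$. Moreover, if $x,y\in A$ satisfy $(x,y)\in\theta_\tau$, then $\Theta(x,y)=\Theta_\tau(x,y)$.
   Context: Let $F$ be an arbitrary algebraic type. A state-morphism on an algebra $\mathbf A$ of type $F$ is an endomorphism $\tau:\mathbf A\to\mathbf A$ with $\tau\circ\tau=\tau$; $(\mathbf A,\tau)$, viewed as an algebra of type $F$ extended by the unary operation $\tau$, is a state-morphism algebra. Its congruences are the congruences of $\mathbf A$ compatible with $\tau$. $\Theta(x,y)$ denotes the congruence of $\mathbf A$ generated by the pair $(x,y)$, and $\Theta_\tau(x,y)$ the congruence of $(\mathbf A,\tau)$ generated by $(x,y)$. *)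

theory Defs
  imports Main
begin

text \<open>An algebra of an arbitrary (finitary) type F: a set of operation symbols of type 'f,
  an arity function ar, a carrier A, and an interpretation op, where op f xs is the
  value of the fundamental operation f on the argument list xs (of length ar f).\<close>

definition is_algebra :: "('f \<Rightarrow> nat) \<Rightarrow> 'a set \<Rightarrow> ('f \<Rightarrow> 'a list \<Rightarrow> 'a) \<Rightarrow> bool" where
  "is_algebra ar A op \<longleftrightarrow>
     (\<forall>f xs. length xs = ar f \<and> set xs \<subseteq> A \<longrightarrow> op f xs \<in> A)"

definition is_endomorphism :: "('f \<Rightarrow> nat) \<Rightarrow> 'a set \<Rightarrow> ('f \<Rightarrow> 'a list \<Rightarrow> 'a) \<Rightarrow> ('a \<Rightarrow> 'a) \<Rightarrow> bool" where
  "is_endomorphism ar A op \<tau> \<longleftrightarrow>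
     (\<forall>x\<in>A. \<tau> x \<in> A) \<and>
     (\<forall>f xs. length xs = ar f \<and> set xs \<subseteq> A \<longrightarrow> \<tau> (op f xs) = op f (map \<tau> xs))"

definition state_morphism_algebra :: "('f \<Rightarrow> nat) \<Rightarrow> 'a set \<Rightarrow> ('f \<Rightarrow> 'a list \<Rightarrow> 'a) \<Rightarrow> ('a \<Rightarrow> 'a) \<Rightarrow> bool" where
  "state_morphism_algebra ar A op \<tau> \<longleftrightarrow>
     is_algebra ar A op \<and> is_endomorphism ar A op \<tau> \<and> (\<forall>x\<in>A. \<tau> (\<tau> x) = \<tau> x)"

definition is_congruence :: "('f \<Rightarrow> nat) \<Rightarrow> 'a set \<Rightarrow> ('f \<Rightarrow> 'a list \<Rightarrow> 'a) \<Rightarrow> 'a rel \<Rightarrow> bool" where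
  "is_congruence ar A op \<theta> \<longleftrightarrow>
     equiv A \<theta> \<and>
     (\<forall>f xs ys. length xs = ar f \<and> list_all2 (\<lambda>x y. (x, y) \<in> \<theta>) xs ys
        \<longrightarrow> (op f xs, op f ys) \<in> \<theta>)"

definition is_sm_congruence :: "('f \<Rightarrow> nat) \<Rightarrow> 'a set \<Rightarrow> ('f \<Rightarrow> 'a list \<Rightarrow> 'a) \<Rightarrow> ('a \<Rightarrow> 'a) \<Rightarrow> 'a rel \<Rightarrow> bool" where
  "is_sm_congruence ar A op \<tau> \<theta> \<longleftrightarrow>
     is_congruence ar A op \<theta> \<and> (\<forall>(x, y)\<in>\<theta>. (\<tau> x, \<tau> y) \<in> \<theta>)"

definition Cg :: "('f \<Rightarrow> nat) \<Rightarrow> 'a set \<Rightarrow> ('f \<Rightarrow> 'a list \<Rightarrow> 'a) \<Rightarrow> 'a \<Rightarrow> 'a \<Rightarrow> 'a rel" where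
  "Cg ar A op x y = \<Inter>{\<theta>. is_congruence ar A op \<theta> \<and> (x, y) \<in> \<theta>}"

definition Cg_sm :: "('f \<Rightarrow> nat) \<Rightarrow> 'a set \<Rightarrow> ('f \<Rightarrow> 'a list \<Rightarrow> 'a) \<Rightarrow> ('a \<Rightarrow> 'a) \<Rightarrow> 'a \<Rightarrow> 'a \<Rightarrow> 'a rel" where
  "Cg_sm ar A op \<tau> x y = \<Inter>{\<theta>. is_sm_congruence ar A op \<tau> \<theta> \<and> (x, y) \<in> \<theta>}"

definition ker_rel :: "'a set \<Rightarrow> ('a \<Rightarrow> 'a) \<Rightarrow> 'a rel" where
  "ker_rel A \<tau> = {(x, y). x \<in> A \<and> y \<in> A \<and> \<tau> x = \<tau> y}"

end

theory Submission
  imports Defs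
begin

text \<open>Since \<tau> is an endomorphism, its kernel \<theta>_\<tau> is a congruence of A. A congruence inside
  \<theta>_\<tau> is automatically compatible with \<tau>: if x \<theta> y then \<tau> x = \<tau> y, and \<tau> x \<theta> \<tau> x by
  reflexivity. For (x, y) \<in> \<theta>_\<tau>, the congruence \<Theta>(x, y) lies below \<theta>_\<tau>, hence is a congruence
  of (A, \<tau>) containing (x, y); so \<Theta>_\<tau>(x, y) \<subseteq> \<Theta>(x, y), and the other inclusion is trivial.\<close>

lemma equiv_Inter:
  assumes "S \<noteq> {}" "\<And>\<theta>. \<theta> \<in> S \<Longrightarrow> equiv A \<theta>"
  shows "equiv A (\<Inter>S)"
proof (rule equivI)
  from assms(1) obtain \<theta>0 where "\<theta>0 \<in> S" by blast
  with assms(2) show "\<Inter>S \<subseteq> A \<times> A"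
    unfolding equiv_def by blast
  show "refl_on A (\<Inter>S)"
    using assms(2) unfolding equiv_def by (blast intro: refl_onI dest: refl_onD)
  show "sym (\<Inter>S)"
    using assms(2) unfolding equiv_def by (blast intro: symI dest: symD)
  show "trans (\<Inter>S)"
    using assms(2) unfolding equiv_def by (blast intro: transI dest: transD)
qed

lemma is_congruence_Inter:
  assumes "S \<noteq> {}" "\<And>\<theta>. \<theta> \<in> S \<Longrightarrow> is_congruence ar A op \<theta>"
  shows "is_congruence ar A op (\<Inter>S)"
proof -
  have "equiv A (\<Inter>S)"
    using assms by (intro equiv_Inter) (auto simp: is_congruence_def)
  moreover have "(op f xs, op f ys) \<in> \<theta>"
    if "length xs = ar f" "list_all2 (\<lambda>x y. (x, y) \<in> \<Inter>S) xs ys" "\<theta> \<in> S" for f xs ys \<theta>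
  proof -
    have "list_all2 (\<lambda>x y. (x, y) \<in> \<theta>) xs ys"
      using that(2) by (rule list_all2_mono) (use that(3) in blast)
    then show ?thesis
      using assms(2)[OF that(3)] that(1) by (simp add: is_congruence_def)
  qed
  ultimately show ?thesis
    unfolding is_congruence_def by blast
qed

lemma is_congruence_Cg:
  assumes "is_congruence ar A op \<theta>" "(x, y) \<in> \<theta>"
  shows "is_congruence ar A op (Cg ar A op x y)"
  unfolding Cg_def using assms by (intro is_congruence_Inter) auto

lemma Cg_least:
  assumes "is_congruence ar A op \<theta>" "(x, y) \<in> \<theta>"
  shows "Cg ar A op x y \<subseteq> \<theta>"
  unfolding Cg_def using assms by blast

lemma pair_in_Cg: "(x, y) \<in> Cg ar A op x y"
  unfolding Cg_def by blast

lemma Cg_subset_Cg_sm: "Cg ar A op x y \<subseteq> Cg_sm ar A op \<tau> x y"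
  unfolding Cg_def Cg_sm_def is_sm_congruence_def by blast

lemma Cg_sm_least:
  assumes "is_sm_congruence ar A op \<tau> \<theta>" "(x, y) \<in> \<theta>"
  shows "Cg_sm ar A op \<tau> x y \<subseteq> \<theta>"
  unfolding Cg_sm_def using assms by blast

lemma is_congruence_ker_rel:
  assumes alg: "is_algebra ar A op" and endo: "is_endomorphism ar A op \<tau>"
  shows "is_congruence ar A op (ker_rel A \<tau>)"
proof -
  have "equiv A (ker_rel A \<tau>)"
    unfolding equiv_def refl_on_def sym_def trans_def ker_rel_def by auto
  moreover have "(op f xs, op f ys) \<in> ker_rel A \<tau>"
    if len: "length xs = ar f" and rel: "list_all2 (\<lambda>x y. (x, y) \<in> ker_rel A \<tau>) xs ys" for f xs ys
  proof -
    have len_ys: "length ys = ar f"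
      using len rel by (simp add: list_all2_lengthD)
    have xs_A: "set xs \<subseteq> A" and ys_A: "set ys \<subseteq> A" and same: "map \<tau> xs = map \<tau> ys"
      using rel by (auto simp: ker_rel_def list_all2_conv_all_nth in_set_conv_nth intro: nth_equalityI)
    have "\<tau> (op f xs) = \<tau> (op f ys)"
      using endo len len_ys xs_A ys_A same by (simp add: is_endomorphism_def)
    moreover have "op f xs \<in> A" "op f ys \<in> A"
      using alg len len_ys xs_A ys_A by (simp_all add: is_algebra_def)
    ultimately show ?thesis
      by (simp add: ker_rel_def)
  qed
  ultimately show ?thesis
    unfolding is_congruence_def by blast
qed

lemma is_sm_congruence_if_subset_ker_rel:
  assumes endo: "is_endomorphism ar A op \<tau>"
    and cong: "is_congruence ar A op \<theta>" and sub: "\<theta> \<subseteq> ker_rel A \<tau>"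
  shows "is_sm_congruence ar A op \<tau> \<theta>"
proof -
  have "(\<tau> x, \<tau> y) \<in> \<theta>" if "(x, y) \<in> \<theta>" for x y
  proof -
    from that sub have "x \<in> A" "\<tau> y = \<tau> x"
      by (auto simp: ker_rel_def)
    moreover have "equiv A \<theta>"
      using cong by (simp add: is_congruence_def)
    ultimately show ?thesis
      using endo by (auto simp: is_endomorphism_def equiv_def intro: refl_onD)
  qed
  then show ?thesis
    using cong by (auto simp: is_sm_congruence_def)
qed

theorem lemma3p3:
  fixes ar :: "'f \<Rightarrow> nat" and A :: "'a set" and op :: "'f \<Rightarrow> 'a list \<Rightarrow> 'a"
    and \<tau> :: "'a \<Rightarrow> 'a"
  assumes "state_morphism_algebra ar A op \<tau>"
  shows "(\<forall>\<theta>. is_congruence ar A op \<theta> \<and> \<theta> \<subseteq> ker_rel A \<tau> \<longrightarrow> is_sm_congruence ar A op \<tau> \<theta>)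
    \<and> (\<forall>x\<in>A. \<forall>y\<in>A. (x, y) \<in> ker_rel A \<tau> \<longrightarrow> Cg ar A op x y = Cg_sm ar A op \<tau> x y)"
proof -
  have alg: "is_algebra ar A op" and endo: "is_endomorphism ar A op \<tau>"
    using assms by (auto simp: state_morphism_algebra_def)
  have ker: "is_congruence ar A op (ker_rel A \<tau>)"
    using alg endo by (rule is_congruence_ker_rel)
  have "Cg ar A op x y = Cg_sm ar A op \<tau> x y" if xy: "(x, y) \<in> ker_rel A \<tau>" for x y
  proof
    have "is_sm_congruence ar A op \<tau> (Cg ar A op x y)"
      using endo is_congruence_Cg[OF ker xy] Cg_least[OF ker xy]
      by (rule is_sm_congruence_if_subset_ker_rel)
    then show "Cg_sm ar A op \<tau> x y \<subseteq> Cg ar A op x y"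
      using pair_in_Cg by (rule Cg_sm_least)
  qed (rule Cg_subset_Cg_sm)
  then show ?thesis
    using is_sm_congruence_if_subset_ker_rel[OF endo] by blast
qed

end
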